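(* Let $C$ be a convex chain with endpoints $p$ and $q$. If $C$ is contained in $D(p,q)$, then the stretch factor of $C$ is at most $\frac{\pi}{2}$.
   Context: A chain is a sequence of points $p=c_1,\dots,c_m=q$ together with the segments $c_ic_{i+1}$; it is convex if the polygon $c_1c_2\cdots c_m$ is convex (the points are in convex position and appear in this cyclic order on their convex hull). $D(p,q)$ is the closed disk having the segment $pq$ as a diameter. The stretch factor of the chain is the smallest $t$ such that for any two vertices $u,v$ of $C$, the length of the sub-chain of $C$ between $u$ and $v$ is at most $t|uv|$. *)

theory Defs
  imports "HOL-Analysis.Analysis"
begin

type_synonym point = "real \<times> real"

definition cross :: "point \<Rightarrow> point \<Rightarrow> real" where
  "cross u v = fst u * snd v - snd u * fst v"

text \<open>It is convex if the
  polygon c 0 c 1 ... c (m-1) is convex: the points are in convex position and appear in this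
  cyclic order on their convex hull, i.e. for a fixed orientation s, every vertex other than the
  endpoints of an edge c i c ((i+1) mod m) lies strictly on the same side of that edge.\<close>
definition convex_chain :: "(nat \<Rightarrow> point) \<Rightarrow> nat \<Rightarrow> bool" where
  "convex_chain c m \<longleftrightarrow> 2 \<le> m \<and> inj_on c {..<m} \<and>
     (\<exists>s::real. (s = 1 \<or> s = -1) \<and>
        (\<forall>i<m. \<forall>j<m. j \<noteq> i \<and> j \<noteq> Suc i mod m \<longrightarrow>
           s * cross (c (Suc i mod m) - c i) (c j - c i) > 0))"

definition chain_set :: "(nat \<Rightarrow> point) \<Rightarrow> nat \<Rightarrow> point set" where
  "chain_set c m = (\<Union>i\<in>{..<m - 1}. closed_segment (c i) (c (Suc i)))"

definition subchain_length :: "(nat \<Rightarrow> point) \<Rightarrow> nat \<Rightarrow> nat \<Rightarrow> real" where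
  "subchain_length c i j = (\<Sum>k\<in>{i..<j}. dist (c k) (c (Suc k)))"

definition diam_disk :: "point \<Rightarrow> point \<Rightarrow> point set" where
  "diam_disk p q = cball (midpoint p q) (dist p q / 2)"

definition stretch_factor :: "(nat \<Rightarrow> point) \<Rightarrow> nat \<Rightarrow> real" where
  "stretch_factor c m = Inf {t. \<forall>i j. i < j \<and> j < m \<longrightarrow>
       subchain_length c i j \<le> t * dist (c i) (c j)}"

end

theory Submission
  imports Defs
begin

text \<open>Because the chain lies in D(p, q), every interior vertex sees p and q at a non-acute
  angle, and convexity propagates this: every vertex sees any earlier and any later vertex at a
  non-acute angle. Hence every sub-chain from u to v again lies in D(u, v). Measure the direction
  of each edge by its angle \<theta> to the chord uv; by convexity \<theta> decreases along the chain and
  stays in [-\<pi>/2, \<pi>/2]. Writing each edge length as the projection of the edge on its unit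
  direction and summing by parts against the centre of D(u, v), the turns of the direction contribute
  at most the radius times the total turn, which gives
  length \<le> (|uv|/2) (cos \<theta>' + \<theta>' + cos \<theta>'' - \<theta>'') \<le> (\<pi>/2) |uv|
  for the first and last directions \<theta>' and \<theta>''.\<close>

lemma cross_self [simp]: "cross u u = 0"
  by (simp add: cross_def)

lemma cross_commute: "cross u v = - cross v u"
  by (simp add: cross_def)

lemma cross_diff_rotate: "cross (b - a) (c - a) = cross (c - b) (a - b)"
  by (simp add: cross_def algebra_simps)

lemma cross_diff_shift: "cross (b - a) (c - a) = cross (b - a) (c - b)"
  by (simp add: cross_def algebra_simps)

lemma cross_diff_left: "cross (u - v) w = cross u w - cross v w"
  by (simp add: cross_def algebra_simps)

lemma cross_sgn: "cross (sgn u) (sgn v) = cross u v / (norm u * norm v)"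
  by (simp add: sgn_div_norm cross_def divide_inverse algebra_simps)

lemma inner_point: "inner (u::point) v = fst u * fst v + snd u * snd v"
  by (cases u; cases v) simp

lemma inner_sq_add_cross_sq: "(inner w e)\<^sup>2 + (cross w e)\<^sup>2 = inner w w * inner e e"
  by (simp add: inner_point cross_def power2_eq_square algebra_simps)

lemma cross_by_frame: "cross w e * inner w' e - inner w e * cross w' e = cross w w' * inner e e"
  by (simp add: inner_point cross_def algebra_simps)

lemma pos_of_mult_pos: "0 < a * b \<Longrightarrow> 0 < b \<Longrightarrow> 0 < (a::real)"
  by (metis mult_nonpos_nonneg not_le less_imp_le)

lemma cross_sign_trans:
  assumes "s * cross d u \<ge> 0" "s * cross d w > 0" "s * cross d z > 0"
    and "s * cross u w > 0" "s * cross w z > 0"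
  shows "s * cross u z > 0"
proof -
  have "(s * cross u z) * (s * cross d w) =
      (s * cross u w) * (s * cross d z) + (s * cross w z) * (s * cross d u)"
    by (simp add: cross_def algebra_simps)
  moreover have "(s * cross u w) * (s * cross d z) > 0" "(s * cross w z) * (s * cross d u) \<ge> 0"
    using assms by simp_all
  ultimately have "(s * cross u z) * (s * cross d w) > 0" by linarith
  then show ?thesis using assms(2) by (rule pos_of_mult_pos)
qed

text \<open>Turning the first leg of a non-acute angle further away from the second leg keeps it
  non-acute, as long as the angle stays below a straight angle.\<close>
lemma inner_nonpos_widen:
  assumes ss: "s * s = 1" and uw: "inner u w \<le> 0" "s * cross u w > 0"
    and vu: "s * cross v u \<ge> 0" and vw: "s * cross v w > 0"
  shows "inner v w \<le> 0"
proof -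
  have "u \<noteq> 0" using uw(2) by (auto simp: cross_def)
  hence uu: "inner u u > 0" by simp
  have uv: "s * cross u v \<le> 0" using vu cross_commute[of v u] by simp
  have "inner v u * (s * cross u w) = (s * cross v w) * inner u u + (s * cross u v) * inner u w"
    by (simp add: cross_def inner_point algebra_simps)
  moreover have "(s * cross u v) * inner u w \<ge> 0" using uv uw(1) by (simp add: mult_nonpos_nonpos)
  moreover have "(s * cross v w) * inner u u > 0" using vw uu by simp
  ultimately have "inner v u * (s * cross u w) > 0" by linarith
  hence vu_pos: "inner v u > 0" using uw(2) by (rule pos_of_mult_pos)
  have "inner u u * inner v w = inner v u * inner u w + (s * s) * (cross u v * cross u w)"
    using ss by (simp add: cross_def inner_point algebra_simps)
  also have "\<dots> = inner v u * inner u w + (s * cross u v) * (s * cross u w)"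
    by (simp add: algebra_simps)
  also have "\<dots> \<le> 0"
    using mult_nonneg_nonpos[of "inner v u" "inner u w"] mult_nonpos_nonneg[of "s * cross u v" "s * cross u w"]
      vu_pos uw uv by linarith
  finally show ?thesis using uu by (meson not_le mult_pos_pos)
qed

lemma scaleR_norm_sgn: "norm x *\<^sub>R sgn x = (x::'a::real_normed_vector)"
  by (cases "x = 0") (simp_all add: sgn_div_norm)

lemma inner_sgn: "inner (sgn x) (sgn y) = inner x y / (norm x * norm (y::'a::real_inner))"
  by (simp add: sgn_div_norm divide_inverse mult.commute)

lemma inner_sgn_self: "inner x (sgn x) = norm (x::'a::real_inner)"
  by (cases "x = 0") (simp_all add: sgn_div_norm dot_square_norm power2_eq_square)

lemma diff_midpoint_right: "q - midpoint p q = (1/2) *\<^sub>R (q - p)"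
proof -
  have "q - midpoint p q = (1/2) *\<^sub>R ((q + q) - (p + q))"
    unfolding midpoint_def scaleR_diff_right by simp
  then show ?thesis by simp
qed

lemma diff_midpoint_left: "p - midpoint p q = - ((1/2) *\<^sub>R (q - p))"
  using diff_midpoint_right[of p q] midpoint_sym[of q p] diff_midpoint_right[of q p]
  by (simp add: scaleR_diff_right)

lemma inner_diff_midpoint:
  fixes p q x :: "'a::real_inner"
  shows "inner (p - x) (q - x) = (dist x (midpoint p q))\<^sup>2 - (dist p q / 2)\<^sup>2"
  unfolding dist_norm power2_norm_eq_inner midpoint_def power_divide
  by (simp add: inner_diff_left inner_diff_right inner_add_left inner_add_right inner_commute
      field_simps)

lemma mem_diam_disk_iff: "x \<in> diam_disk p q \<longleftrightarrow> inner (p - x) (q - x) \<le> 0"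
proof -
  have "x \<in> diam_disk p q \<longleftrightarrow> \<bar>dist x (midpoint p q)\<bar> \<le> \<bar>dist p q / 2\<bar>"
    by (simp add: diam_disk_def dist_commute)
  also have "\<dots> \<longleftrightarrow> (dist x (midpoint p q))\<^sup>2 \<le> (dist p q / 2)\<^sup>2"
    by (rule abs_le_square_iff)
  finally show ?thesis by (simp add: inner_diff_midpoint)
qed

definition edges_oriented :: "real \<Rightarrow> (nat \<Rightarrow> point) \<Rightarrow> nat \<Rightarrow> bool" where
  "edges_oriented s c m \<longleftrightarrow> (\<forall>i<m. \<forall>j<m. j \<noteq> i \<and> j \<noteq> Suc i mod m \<longrightarrow>
     s * cross (c (Suc i mod m) - c i) (c j - c i) > 0)"

lemma convex_chain_iff:
  "convex_chain c m \<longleftrightarrow> 2 \<le> m \<and> inj_on c {..<m} \<and>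
     (\<exists>s. s * s = 1 \<and> edges_oriented s c m)"
  unfolding convex_chain_def edges_oriented_def square_eq_1_iff ..

lemma edges_oriented_edge:
  assumes "edges_oriented s c m" "Suc a < m" "j < m" "j \<noteq> a" "j \<noteq> Suc a"
  shows "s * cross (c (Suc a) - c a) (c j - c a) > 0"
proof -
  have "Suc a mod m = Suc a" "a < m" using assms(2) by simp_all
  then show ?thesis using assms unfolding edges_oriented_def by metis
qed

lemma edges_oriented_increasing:
  assumes E: "edges_oriented s c m" and "a < b" "b < k" "k < m"
  shows "s * cross (c b - c a) (c k - c a) > 0"
  using assms(3,4)
proof (induction k)
  case 0
  then show ?case by simp
next
  case (Suc n)
  have step: "s * cross (c b' - c a) (c (Suc b') - c a) > 0" if "a < b'" "Suc b' < m" for b'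
    using edges_oriented_edge[OF E, of b' a] that cross_diff_rotate[of "c b'" "c a" "c (Suc b')"]
    by simp
  show ?case
  proof (cases "n = b")
    case True
    then show ?thesis using step Suc.prems assms(2) by simp
  next
    case False
    hence bn: "b < n" using Suc.prems by simp
    have "s * cross (c (Suc a) - c a) (c b - c a) \<ge> 0"
      using edges_oriented_edge[OF E, of a b] assms(2) bn Suc.prems
      by (cases "b = Suc a") (simp_all add: less_imp_le)
    moreover have "s * cross (c (Suc a) - c a) (c n - c a) > 0"
      "s * cross (c (Suc a) - c a) (c (Suc n) - c a) > 0"
      using edges_oriented_edge[OF E, of a n] edges_oriented_edge[OF E, of a "Suc n"]
        assms(2) bn Suc.prems by simp_all
    moreover have "s * cross (c b - c a) (c n - c a) > 0" using Suc bn by simp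
    moreover have "s * cross (c n - c a) (c (Suc n) - c a) > 0" using step bn assms(2) Suc.prems by simp
    ultimately show ?thesis by (rule cross_sign_trans)
  qed
qed

lemma edges_oriented_consecutive:
  assumes "edges_oriented s c m" "Suc (Suc n) < m"
  shows "s * cross (c (Suc n) - c n) (c (Suc (Suc n)) - c (Suc n)) > 0"
  using edges_oriented_increasing[OF assms(1), of n "Suc n" "Suc (Suc n)"] assms(2)
    cross_diff_shift[of "c (Suc n)" "c n" "c (Suc (Suc n))"] by simp

text \<open>The non-acute angle at c k between the endpoints is widened twice, first moving the last
  endpoint back to c b, then the first endpoint forward to c a.\<close>
lemma edges_oriented_inner_nonpos:
  assumes E: "edges_oriented s c m" and ss: "s * s = 1"
    and ends: "\<And>k. 0 < k \<Longrightarrow> k < m - 1 \<Longrightarrow> inner (c 0 - c k) (c (m - 1) - c k) \<le> 0"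
    and "a < k" "k < b" "b < m"
  shows "inner (c a - c k) (c b - c k) \<le> 0"
proof -
  define A B P Q where "A = c a - c k" and "B = c b - c k"
    and "P = c 0 - c k" and "Q = c (m - 1) - c k"
  have QP: "s * cross Q P > 0"
    using edges_oriented_increasing[OF E, of 0 k "m - 1"] assms(4-6)
      cross_diff_rotate[of "c k" "c 0" "c (m - 1)"]
    unfolding Q_def P_def by simp
  have BQ: "s * cross B Q \<ge> 0"
    using edges_oriented_increasing[OF E, of k b "m - 1"] assms(4-6) unfolding B_def Q_def
    by (cases "b = m - 1") (simp_all add: less_imp_le)
  have BP: "s * cross B P > 0"
    using edges_oriented_increasing[OF E, of 0 k b] assms(4-6) cross_diff_rotate[of "c k" "c 0" "c b"]
    unfolding B_def P_def by simp
  have PA: "s * cross P A \<ge> 0"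
    using edges_oriented_increasing[OF E, of 0 a k] assms(4-6)
      cross_diff_rotate[of "c a" "c 0" "c k"] cross_diff_rotate[of "c k" "c a" "c 0"]
    unfolding A_def P_def by (cases "a = 0") (simp_all add: less_imp_le)
  have BA: "s * cross B A > 0"
    using edges_oriented_increasing[OF E, of a k b] assms(4-6) cross_diff_rotate[of "c k" "c a" "c b"]
    unfolding B_def A_def by simp
  have "inner Q P \<le> 0" using ends[of k] assms(4-6) unfolding P_def Q_def
    by (simp add: inner_commute)
  hence "inner B P \<le> 0" using inner_nonpos_widen[OF ss _ QP BQ BP] by blast
  hence "inner A B \<le> 0"
    using inner_nonpos_widen[of "-s" P B A] ss BP PA BA
      cross_commute[of P B] cross_commute[of A P] cross_commute[of A B]
    by (simp add: inner_commute)
  then show ?thesis unfolding A_def B_def .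
qed

lemma inner_edge_chord_nonneg:
  fixes c :: "nat \<Rightarrow> 'a::real_inner"
  assumes obtuse: "\<And>a k b. a < k \<Longrightarrow> k < b \<Longrightarrow> b < m \<Longrightarrow> inner (c a - c k) (c b - c k) \<le> 0"
    and "i \<le> k" "Suc k \<le> j" "j < m"
  shows "inner (c (Suc k) - c k) (c j - c i) \<ge> 0"
proof -
  have "inner (c (Suc k) - c k) (c j - c i) =
      inner (c (Suc k) - c k) (c (Suc k) - c k) - inner (c k - c (Suc k)) (c j - c (Suc k))
      - inner (c i - c k) (c (Suc k) - c k)"
    by (simp add: inner_diff_left inner_diff_right inner_commute algebra_simps)
  moreover have "inner (c k - c (Suc k)) (c j - c (Suc k)) \<le> 0"
    using obtuse[of k "Suc k" j] assms by (cases "Suc k = j") auto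
  moreover have "inner (c i - c k) (c (Suc k) - c k) \<le> 0"
    using obtuse[of i k "Suc k"] assms by (cases "i = k") auto
  moreover have "inner (c (Suc k) - c k) (c (Suc k) - c k) \<ge> 0" by simp
  ultimately show ?thesis by linarith
qed

lemma cos_sin_chord_le: "(cos a - cos (b::real))\<^sup>2 + (sin a - sin b)\<^sup>2 \<le> (a - b)\<^sup>2"
proof -
  have "(cos a - cos b)\<^sup>2 + (sin a - sin b)\<^sup>2 = 2 - 2 * cos (a - b)"
    by (simp add: cos_diff power2_eq_square algebra_simps)
  also have "cos (a - b) = cos (2 * ((a - b) / 2))" by (simp only: mult_2 field_sum_of_halves)
  also have "2 - 2 * \<dots> = 4 * (sin ((a - b) / 2))\<^sup>2" by (simp only: cos_double_sin) simp
  also have "\<dots> \<le> 4 * ((a - b) / 2)\<^sup>2"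
    using abs_sin_x_le_abs_x[of "(a - b) / 2"] by (simp add: abs_le_square_iff[symmetric])
  also have "\<dots> = (a - b)\<^sup>2" by (simp add: power_divide)
  finally show ?thesis .
qed

lemma cos_add_le_pi_half:
  assumes "\<bar>\<theta>\<bar> \<le> pi / 2"
  shows "cos \<theta> + \<theta> \<le> pi / 2"
proof -
  have "cos \<theta> = sin (pi / 2 - \<theta>)" by (simp add: cos_sin_eq)
  also have "\<dots> \<le> pi / 2 - \<theta>" using assms by (intro sin_x_le_x) linarith
  finally show ?thesis by simp
qed

text \<open>The angle of a unit vector w with a unit vector e, signed by the orientation s; it is
  only meaningful for w with a non-negative component along e.\<close>
definition signed_angle :: "real \<Rightarrow> point \<Rightarrow> point \<Rightarrow> real" where
  "signed_angle s e w = arcsin (s * cross w e)"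

lemma sq_inner_add_sq_signed_cross:
  assumes ss: "s * s = 1" and e_unit: "norm e = 1" and w_unit: "norm w = 1"
  shows "(inner w e)\<^sup>2 + (s * cross w e)\<^sup>2 = 1"
proof -
  have "(s * cross w e)\<^sup>2 = (s * s) * (cross w e)\<^sup>2" by (simp add: power2_eq_square)
  also have "\<dots> = inner w w * inner e e - (inner w e)\<^sup>2"
    using ss inner_sq_add_cross_sq[of w e] by simp
  finally show ?thesis using w_unit e_unit by (simp add: norm_eq_1)
qed

lemma abs_signed_cross_le_1:
  assumes "s * s = 1" "norm e = 1" "norm w = 1"
  shows "\<bar>s * cross w e\<bar> \<le> 1"
proof -
  have "(s * cross w e)\<^sup>2 \<le> 1"
    using sq_inner_add_sq_signed_cross[OF assms] zero_le_power2[of "inner w e"] by linarith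
  then show ?thesis by (simp add: abs_square_le_1)
qed

lemma sin_signed_angle:
  assumes "s * s = 1" "norm e = 1" "norm w = 1"
  shows "sin (signed_angle s e w) = s * cross w e"
  using abs_signed_cross_le_1[OF assms] by (simp add: signed_angle_def abs_le_iff)

lemma cos_signed_angle:
  assumes "s * s = 1" "norm e = 1" "norm w = 1" and "0 \<le> inner w e"
  shows "cos (signed_angle s e w) = inner w e"
proof -
  have "1 - (s * cross w e)\<^sup>2 = (inner w e)\<^sup>2"
    using sq_inner_add_sq_signed_cross[OF assms(1-3)] by linarith
  then have "cos (signed_angle s e w) = sqrt ((inner w e)\<^sup>2)"
    using abs_signed_cross_le_1[OF assms(1-3)] by (simp add: signed_angle_def cos_arcsin abs_le_iff)
  then show ?thesis using assms(4) by simp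
qed

lemma abs_signed_angle_le:
  assumes "s * s = 1" "norm e = 1" "norm w = 1"
  shows "\<bar>signed_angle s e w\<bar> \<le> pi / 2"
proof -
  have "-1 \<le> s * cross w e" "s * cross w e \<le> 1" using abs_signed_cross_le_1[OF assms] by linarith+
  then show ?thesis using arcsin_bounded[of "s * cross w e"] unfolding signed_angle_def by linarith
qed

lemma sin_signed_angle_diff:
  assumes ss: "s * s = 1" and e_unit: "norm e = 1"
    and w: "norm w = 1" "0 \<le> inner w e" and w': "norm w' = 1" "0 \<le> inner w' e"
  shows "sin (signed_angle s e w - signed_angle s e w') = s * cross w w'"
proof -
  have "sin (signed_angle s e w - signed_angle s e w') =
      (s * cross w e) * inner w' e - inner w e * (s * cross w' e)"
    by (simp only: sin_diff sin_signed_angle[OF ss e_unit w(1)] sin_signed_angle[OF ss e_unit w'(1)]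
        cos_signed_angle[OF ss e_unit w] cos_signed_angle[OF ss e_unit w'])
  also have "\<dots> = s * (cross w e * inner w' e - inner w e * cross w' e)"
    by (simp add: right_diff_distrib)
  also have "\<dots> = s * cross w w'"
    using e_unit by (simp add: cross_by_frame norm_eq_1)
  finally show ?thesis .
qed

lemma signed_angle_less:
  assumes ss: "s * s = 1" and e_unit: "norm e = 1"
    and w: "norm w = 1" "0 \<le> inner w e" and w': "norm w' = 1" "0 \<le> inner w' e"
    and turn: "0 < s * cross w w'"
  shows "signed_angle s e w' < signed_angle s e w"
proof (rule ccontr)
  let ?d = "signed_angle s e w' - signed_angle s e w"
  assume "\<not> ?thesis"
  moreover have "?d \<le> pi"
    using abs_signed_angle_le[OF ss e_unit w(1)] abs_signed_angle_le[OF ss e_unit w'(1)] by linarith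
  ultimately have "0 \<le> sin ?d" by (intro sin_ge_zero) simp_all
  moreover have "sin ?d = - (s * cross w w')"
    using sin_signed_angle_diff[OF ss e_unit w w'] by (metis minus_diff_eq sin_minus)
  ultimately show False using turn by simp
qed

lemma norm_diff_le_signed_angle:
  assumes ss: "s * s = 1" and e_unit: "norm e = 1"
    and w: "norm w = 1" "0 \<le> inner w e" and w': "norm w' = 1" "0 \<le> inner w' e"
    and turn: "0 < s * cross w w'"
  shows "norm (w - w') \<le> signed_angle s e w - signed_angle s e w'"
proof -
  let ?a = "signed_angle s e w" and ?b = "signed_angle s e w'"
  have "(norm (w - w'))\<^sup>2 = (inner w e - inner w' e)\<^sup>2 + (s * s) * (cross w e - cross w' e)\<^sup>2"
    using inner_sq_add_cross_sq[of "w - w'" e] dot_square_norm[of "w - w'"] e_unit ss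
    by (simp add: norm_eq_1 inner_diff_left cross_diff_left)
  also have "\<dots> = (inner w e - inner w' e)\<^sup>2 + (s * cross w e - s * cross w' e)\<^sup>2"
    by (simp only: right_diff_distrib[symmetric] power_mult_distrib power2_eq_square mult_ac)
  also have "\<dots> = (cos ?a - cos ?b)\<^sup>2 + (sin ?a - sin ?b)\<^sup>2"
    by (simp only: sin_signed_angle[OF ss e_unit w(1)] sin_signed_angle[OF ss e_unit w'(1)]
        cos_signed_angle[OF ss e_unit w] cos_signed_angle[OF ss e_unit w'])
  also have "\<dots> \<le> (?a - ?b)\<^sup>2" by (rule cos_sin_chord_le)
  finally have "\<bar>norm (w - w')\<bar> \<le> \<bar>?a - ?b\<bar>" by (simp only: abs_le_square_iff)
  then show ?thesis using signed_angle_less[OF ss e_unit w w' turn] by simp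
qed

lemma norm_sgn_diff_le_signed_angle:
  assumes ss: "s * s = 1" and e_unit: "norm e = 1" and "u \<noteq> 0" "v \<noteq> 0"
    and "0 \<le> inner (sgn u) e" "0 \<le> inner (sgn v) e" and "0 < s * cross u v"
  shows "norm (sgn u - sgn v) \<le> signed_angle s e (sgn u) - signed_angle s e (sgn v)"
proof (rule norm_diff_le_signed_angle[OF ss e_unit])
  have "0 < s * cross u v / (norm u * norm v)" using assms(3-7) by simp
  then show "0 < s * cross (sgn u) (sgn v)" by (simp add: cross_sgn)
qed (use assms(3-6) in \<open>simp_all add: norm_sgn\<close>)

text \<open>Summation by parts: each edge length is the projection of the edge onto its unit direction,
  and at an interior vertex x k the change of direction costs at most the distance r from z times
  the turn of \<theta>.\<close>
lemma sum_dist_le_by_turning: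
  fixes x t :: "nat \<Rightarrow> 'a::real_inner" and \<theta> :: "nat \<Rightarrow> real"
  assumes "i < j"
    and edge: "\<And>k. i \<le> k \<Longrightarrow> k < j \<Longrightarrow> dist (x k) (x (Suc k)) = inner (x (Suc k) - x k) (t k)"
    and near: "\<And>k. i < k \<Longrightarrow> k < j \<Longrightarrow> norm (x k - z) \<le> r"
    and turn: "\<And>k. i \<le> k \<Longrightarrow> Suc k < j \<Longrightarrow> norm (t k - t (Suc k)) \<le> \<theta> k - \<theta> (Suc k)"
  shows "(\<Sum>k\<in>{i..<j}. dist (x k) (x (Suc k)))
    \<le> inner (x j - z) (t (j - 1)) - inner (x i - z) (t i) + r * (\<theta> i - \<theta> (j - 1))"
proof -
  have "Suc i \<le> j" using \<open>i < j\<close> by simp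
  then show ?thesis
  proof (induction rule: dec_induct)
    case base
    then show ?case using edge[of i] \<open>i < j\<close> by (simp add: inner_diff_left)
  next
    case (step n)
    have near_n: "norm (x n - z) \<le> r" using near step.hyps by simp
    hence "0 \<le> r" using norm_ge_zero[of "x n - z"] by linarith
    have "inner (x n - z) (t (n - 1) - t n) \<le> norm (x n - z) * norm (t (n - 1) - t n)"
      by (rule norm_cauchy_schwarz)
    also have "\<dots> \<le> r * (\<theta> (n - 1) - \<theta> n)"
      using near_n \<open>0 \<le> r\<close> turn[of "n - 1"] step.hyps by (intro mult_mono) simp_all
    finally have "inner (x n - z) (t (n - 1)) - inner (x n - z) (t n) \<le> r * (\<theta> (n - 1) - \<theta> n)"
      by (simp add: inner_diff_right)
    moreover have "dist (x n) (x (Suc n)) = inner (x (Suc n) - z) (t n) - inner (x n - z) (t n)"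
      using edge[of n] step.hyps by (simp add: inner_diff_left)
    ultimately show ?case using step by (simp add: algebra_simps)
  qed
qed

lemma subchain_length_le_pi_half_dist:
  assumes E: "edges_oriented s c m" and ss: "s * s = 1" and inj: "inj_on c {..<m}"
    and obtuse: "\<And>a k b. a < k \<Longrightarrow> k < b \<Longrightarrow> b < m \<Longrightarrow> inner (c a - c k) (c b - c k) \<le> 0"
    and ij: "i < j" and jm: "j < m"
  shows "subchain_length c i j \<le> pi / 2 * dist (c i) (c j)"
proof -
  define r where "r = dist (c i) (c j) / 2"
  define z where "z = midpoint (c i) (c j)"
  define e where "e = sgn (c j - c i)"
  define t where "t k = sgn (c (Suc k) - c k)" for k
  define \<theta> where "\<theta> k = signed_angle s e (t k)" for k
  have "c i \<noteq> c j" using inj ij jm by (simp add: inj_on_eq_iff)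
  hence e_unit: "norm e = 1" by (simp add: e_def norm_sgn)
  have "(1/2) *\<^sub>R (c j - c i) = (1/2) *\<^sub>R (norm (c j - c i) *\<^sub>R e)"
    by (simp add: e_def scaleR_norm_sgn)
  also have "\<dots> = r *\<^sub>R e" by (simp add: r_def dist_norm norm_minus_commute)
  finally have c_ij: "c j - z = r *\<^sub>R e" "c i - z = - (r *\<^sub>R e)"
    by (simp_all add: z_def diff_midpoint_left diff_midpoint_right)
  have edge_ne: "c (Suc k) - c k \<noteq> 0" if "k < j" for k
    using inj that jm by (simp add: inj_on_eq_iff)
  have t_unit: "norm (t k) = 1" if "k < j" for k
    using edge_ne[OF that] by (simp add: t_def norm_sgn)
  have t_e: "0 \<le> inner (t k) e" if "i \<le> k" "k < j" for k
    using inner_edge_chord_nonneg[of m c, OF obtuse _ _ jm, of i k] that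
    by (simp add: t_def e_def inner_sgn)
  have turn: "norm (t k - t (Suc k)) \<le> \<theta> k - \<theta> (Suc k)" if "i \<le> k" "Suc k < j" for k
    using norm_sgn_diff_le_signed_angle[OF ss e_unit edge_ne[of k] edge_ne[of "Suc k"]
        t_e[of k, unfolded t_def] t_e[of "Suc k", unfolded t_def]] edges_oriented_consecutive[OF E, of k]
      that jm
    by (simp add: t_def \<theta>_def)
  have near: "norm (c k - z) \<le> r" if "i < k" "k < j" for k
    using obtuse[of i k j] that jm mem_diam_disk_iff[of "c k" "c i" "c j"]
    by (simp add: diam_disk_def z_def r_def dist_norm norm_minus_commute)
  have edge: "dist (c k) (c (Suc k)) = inner (c (Suc k) - c k) (t k)" for k
    by (simp add: t_def inner_sgn_self dist_norm norm_minus_commute)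
  have cos_\<theta>: "cos (\<theta> k) = inner (t k) e" and abs_\<theta>: "\<bar>\<theta> k\<bar> \<le> pi / 2" if "i \<le> k" "k < j" for k
    using cos_signed_angle[OF ss e_unit] abs_signed_angle_le[OF ss e_unit] t_unit t_e that
    by (simp_all add: \<theta>_def)
  have "subchain_length c i j \<le> inner (c j - z) (t (j - 1)) - inner (c i - z) (t i)
      + r * (\<theta> i - \<theta> (j - 1))"
    unfolding subchain_length_def by (rule sum_dist_le_by_turning[where x = c and t = t and \<theta> = \<theta>, OF ij edge near turn])
  also have "\<dots> = r * ((cos (\<theta> i) + \<theta> i) + (cos (- \<theta> (j - 1)) + - \<theta> (j - 1)))"
    using cos_\<theta>[of i] cos_\<theta>[of "j - 1"] ij
    by (simp add: c_ij inner_commute right_diff_distrib distrib_left)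
  also have "\<dots> \<le> r * (pi / 2 + pi / 2)"
    using abs_\<theta>[of i] abs_\<theta>[of "j - 1"] ij
    by (intro mult_left_mono add_mono cos_add_le_pi_half) (simp_all add: r_def)
  finally show ?thesis by (simp add: r_def mult.commute)
qed

lemma nonneg_of_subchain_length_le:
  assumes "2 \<le> m" "c 0 \<noteq> c (m - 1)"
    and "\<forall>i j. i < j \<and> j < m \<longrightarrow> subchain_length c i j \<le> t * dist (c i) (c j)"
  shows "0 \<le> t"
proof -
  have "0 \<le> subchain_length c 0 (m - 1)" by (simp add: subchain_length_def sum_nonneg)
  also have "\<dots> \<le> t * dist (c 0) (c (m - 1))" using assms(1,3) by simp
  finally have "0 \<le> t * dist (c 0) (c (m - 1))" .
  moreover have "0 < dist (c 0) (c (m - 1))" using assms(2) by simp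
  ultimately show "0 \<le> t" by (simp add: zero_le_mult_iff)
qed

lemma stretch_factor_le:
  assumes "2 \<le> m" "c 0 \<noteq> c (m - 1)"
    and "\<And>i j. i < j \<Longrightarrow> j < m \<Longrightarrow> subchain_length c i j \<le> t * dist (c i) (c j)"
  shows "stretch_factor c m \<le> t"
  unfolding stretch_factor_def
  using assms nonneg_of_subchain_length_le[OF assms(1,2)]
  by (intro cInf_lower bdd_belowI[where m = 0]) auto

theorem theorem6:
  fixes c :: "nat \<Rightarrow> real \<times> real" and m :: nat
  assumes "convex_chain c m"
    and "chain_set c m \<subseteq> diam_disk (c 0) (c (m - 1))"
  shows "stretch_factor c m \<le> pi / 2"
proof -
  obtain s where ss: "s * s = 1" and E: "edges_oriented s c m"
    using assms(1) unfolding convex_chain_iff by blast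
  have m2: "2 \<le> m" and inj: "inj_on c {..<m}" using assms(1) unfolding convex_chain_iff by blast+
  have "c k \<in> diam_disk (c 0) (c (m - 1))" if "k < m - 1" for k
    using assms(2) that unfolding chain_set_def by blast
  hence "inner (c a - c k) (c b - c k) \<le> 0" if "a < k" "k < b" "b < m" for a k b
    using edges_oriented_inner_nonpos[OF E ss _ that] mem_diam_disk_iff by blast
  hence "subchain_length c i j \<le> pi / 2 * dist (c i) (c j)" if "i < j" "j < m" for i j
    using subchain_length_le_pi_half_dist[OF E ss inj _ that] by blast
  moreover have "c 0 \<noteq> c (m - 1)" using m2 inj by (simp add: inj_on_eq_iff)
  ultimately show ?thesis using m2 by (intro stretch_factor_le)
qed

end
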